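(* Let $C\subset\mathbb{D}$ be a subspace of dimension $n\ge 1$ with basis $c_1,\dots,c_n$. Then there exists a constant coefficient differential operator $L_0\in\mathbb{C}[\partial]$ which factors as $$L_0=\bar Q\circ\frac{1}{\pi(x)}\circ \bar K_C,$$ where $\bar Q$ and $\bar K_C=\tau_C(x)K_C$ are differential operators in $x$ with polynomial-exponential coefficients and $\pi(x)$ is a polynomial-exponential function.
   Context: $\mathbb{D}$ is the complex vector space spanned by the distributions $\Delta(\lambda,m)$ ($\lambda\in\mathbb{C}$, $m\in\mathbb{N}$) acting on functions of $z$ by $\Delta(\lambda,m)[f(z)]=f^{(m)}(\lambda)$; for a function $f(x,z)$, $c[f(x,z)]$ denotes the resulting function of $x$. Write $\partial=\partial/\partial x$. A polynomial-exponential function is a function of the form $\sum_{i=1}^k p_i(x)e^{\mu_i x}$ with $\mu_i\in\mathbb{C}$, $p_i\in\mathbb{C}[x]$. $\tau_C(x)=\mathrm{Wr}(c_1(e^{xz}),\dots,c_n(e^{xz}))$ is the Wronskian in $x$ of the functions $c_i(e^{xz})$, and $K_C$ is the unique monic ordinary differential operator in $x$ of order $n$ whose kernel contains the functions $c_i(e^{xz})$, i.e. $K_C(f)=\frac{1}{\tau_C(x)}\mathrm{Wr}(c_1(e^{xz}),\dots,c_n(e^{xz}),f(x))$. *)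

theory Defs
  imports "HOL-Complex_Analysis.Complex_Analysis" "HOL-Computational_Algebra.Polynomial"
    "Jordan_Normal_Form.Determinant"
begin

text \<open>An element of the space D: a finitely supported family of coefficients,
  c = sum of c(lambda,m) * Delta(lambda,m).\<close>
definition is_dist :: "(complex \<times> nat \<Rightarrow> complex) \<Rightarrow> bool" where
  "is_dist c \<longleftrightarrow> finite {p. c p \<noteq> 0}"

text \<open>Action on a function F of z:  Delta(lambda,m)[F] = F^(m)(lambda).\<close>
definition apply_dist :: "(complex \<times> nat \<Rightarrow> complex) \<Rightarrow> (complex \<Rightarrow> complex) \<Rightarrow> complex" where
  "apply_dist c F = (\<Sum>p\<in>{p. c p \<noteq> 0}. c p * (deriv ^^ snd p) F (fst p))"

definition dist_exp :: "(complex \<times> nat \<Rightarrow> complex) \<Rightarrow> complex \<Rightarrow> complex" where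
  "dist_exp c = (\<lambda>x. apply_dist c (\<lambda>z. exp (x * z)))"

definition polyexp :: "(complex \<Rightarrow> complex) \<Rightarrow> bool" where
  "polyexp f \<longleftrightarrow> (\<exists>ps :: (complex \<times> complex poly) list.
      \<forall>x. f x = (\<Sum>(mu, p)\<leftarrow>ps. poly p x * exp (mu * x)))"

definition wronskian :: "nat \<Rightarrow> (nat \<Rightarrow> complex \<Rightarrow> complex) \<Rightarrow> complex \<Rightarrow> complex" where
  "wronskian k fs x = det (mat k k (\<lambda>(i, j). (deriv ^^ i) (fs j) x))"

definition apply_op :: "(complex \<Rightarrow> complex) list \<Rightarrow> (complex \<Rightarrow> complex) \<Rightarrow> complex \<Rightarrow> complex" where
  "apply_op as f x = (\<Sum>i<length as. (as ! i) x * (deriv ^^ i) f x)"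

definition apply_const_op :: "complex list \<Rightarrow> (complex \<Rightarrow> complex) \<Rightarrow> complex \<Rightarrow> complex" where
  "apply_const_op l f x = (\<Sum>i<length l. (l ! i) * (deriv ^^ i) f x)"

text \<open>Kbar_C = tau_C K_C :  f |-> Wr(c_1(e^{xz}),...,c_n(e^{xz}), f).\<close>
definition Kbar :: "nat \<Rightarrow> (nat \<Rightarrow> complex \<times> nat \<Rightarrow> complex) \<Rightarrow> (complex \<Rightarrow> complex) \<Rightarrow> complex \<Rightarrow> complex" where
  "Kbar n c f = wronskian (Suc n) (\<lambda>j. if j < n then dist_exp (c j) else f)"

end

theory Submission
  imports Defs
begin

(* The functions g\<^sub>j = c\<^sub>j[e\<^sup>x\<^sup>z] are exponential polynomials; they are linearly independent
   because the c\<^sub>j are, so their Wronskian \<tau> is not identically zero, and they are all killed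
   by a constant coefficient operator P(\<partial>) = \<partial>\<^sup>n \<Prod>(\<partial> - \<lambda>)\<^sup>R\<^sup>+\<^sup>1 of some degree n + M.
   By Leibniz' rule the coefficients of \<partial>\<^sup>n, ..., \<partial>\<^sup>n\<^sup>+\<^sup>M in \<partial>\<^sup>k \<circ> Kbar\<^sub>C (k \<le> M) form a
   triangular system with diagonal \<tau>; solving it with cofactors gives polynomial-exponential
   q\<^sub>k such that \<tau>\<^sup>M\<^sup>+\<^sup>1 P(\<partial>) - \<Sum> q\<^sub>k \<partial>\<^sup>k \<circ> Kbar\<^sub>C has order < n. This operator kills the g\<^sub>j,
   so it vanishes wherever \<tau> \<noteq> 0. Finally write Kbar\<^sub>C f = \<pi> (Kbar\<^sub>C f / \<pi>) with
   \<pi> = \<tau>\<^sup>2\<^sup>M\<^sup>+\<^sup>1: in the Leibniz expansion of \<partial>\<^sup>k (\<pi> v) every term carries the factor \<tau>\<^sup>M\<^sup>+\<^sup>1,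
   which cancels. *)

section \<open>Polynomial-exponential functions\<close>

definition pderiv_shift :: "complex \<Rightarrow> complex poly \<Rightarrow> complex poly" where
  "pderiv_shift a p = pderiv p + Polynomial.smult a p"

lemma has_field_derivative_poly_exp:
  "((\<lambda>x. poly p x * exp (a * x)) has_field_derivative poly (pderiv_shift a p) x * exp (a * x)) (at x)"
proof -
  have "((\<lambda>x. poly p x * exp (a * x)) has_field_derivative
      poly p x * (exp (a * x) * a) + poly (pderiv p) x * exp (a * x)) (at x)"
    by (intro DERIV_mult' poly_DERIV) (auto intro!: derivative_eq_intros)
  then show ?thesis
    by (simp add: pderiv_shift_def algebra_simps)
qed

definition polyexp_of :: "(complex \<times> complex poly) list \<Rightarrow> complex \<Rightarrow> complex" where
  "polyexp_of ps = (\<lambda>x. \<Sum>(a, p)\<leftarrow>ps. poly p x * exp (a * x))"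

lemma polyexp_iff_polyexp_of: "polyexp f \<longleftrightarrow> (\<exists>ps. f = polyexp_of ps)"
  unfolding polyexp_def polyexp_of_def by (auto simp: fun_eq_iff)

lemma has_field_derivative_polyexp_of:
  "(polyexp_of ps has_field_derivative
     polyexp_of (map (\<lambda>(a, p). (a, pderiv_shift a p)) ps) x) (at x)"
proof (induction ps)
  case Nil
  then show ?case by (simp add: polyexp_of_def)
next
  case (Cons ap ps)
  then show ?case
    using DERIV_add[OF has_field_derivative_poly_exp[of "snd ap" "fst ap"] Cons.IH]
    by (simp add: polyexp_of_def case_prod_beta)
qed

lemma polyexp_holomorphic: "polyexp f \<Longrightarrow> f holomorphic_on S"
  unfolding polyexp_iff_polyexp_of holomorphic_on_def
  using has_field_derivative_polyexp_of field_differentiable_at_within field_differentiable_def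
  by blast

lemma polyexp_deriv: "polyexp f \<Longrightarrow> polyexp (deriv f)"
  unfolding polyexp_iff_polyexp_of using has_field_derivative_polyexp_of DERIV_imp_deriv by blast

lemma polyexp_higher_deriv: "polyexp f \<Longrightarrow> polyexp ((deriv ^^ i) f)"
  by (induction i) (auto intro: polyexp_deriv)

lemma polyexp_poly_exp: "polyexp (\<lambda>x. poly p x * exp (a * x))"
  unfolding polyexp_def by (rule exI[of _ "[(a, p)]"]) simp

lemma polyexp_const: "polyexp (\<lambda>x. c)"
  using polyexp_poly_exp[of "[:c:]" 0] by simp

lemma polyexp_add: "polyexp f \<Longrightarrow> polyexp g \<Longrightarrow> polyexp (\<lambda>x. f x + g x)"
proof -
  assume "polyexp f" "polyexp g"
  then obtain ps qs where "f = polyexp_of ps" "g = polyexp_of qs"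
    using polyexp_iff_polyexp_of by blast
  then have "(\<lambda>x. f x + g x) = polyexp_of (ps @ qs)"
    by (simp add: polyexp_of_def)
  then show ?thesis
    using polyexp_iff_polyexp_of by blast
qed

lemma polyexp_poly_exp_mult:
  assumes "polyexp g"
  shows "polyexp (\<lambda>x. poly p x * exp (a * x) * g x)"
proof -
  obtain qs where g: "g = polyexp_of qs"
    using assms polyexp_iff_polyexp_of by blast
  have "(\<lambda>x. poly p x * exp (a * x) * g x) = polyexp_of (map (\<lambda>(b, q). (a + b, p * q)) qs)"
    unfolding g polyexp_of_def fun_eq_iff
    by (induction qs) (auto simp: algebra_simps exp_add)
  then show ?thesis
    using polyexp_iff_polyexp_of by blast
qed

lemma polyexp_mult:
  assumes "polyexp f" and "polyexp g"
  shows "polyexp (\<lambda>x. f x * g x)"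
proof -
  obtain ps where f: "f = polyexp_of ps"
    using assms(1) polyexp_iff_polyexp_of by blast
  have "polyexp (\<lambda>x. polyexp_of ps x * g x)"
  proof (induction ps)
    case Nil
    then show ?case by (simp add: polyexp_of_def polyexp_const)
  next
    case (Cons ap ps)
    then show ?case
      using polyexp_add[OF polyexp_poly_exp_mult[OF assms(2), of "snd ap" "fst ap"] Cons.IH]
      by (simp add: polyexp_of_def case_prod_beta algebra_simps)
  qed
  then show ?thesis
    using f by simp
qed

lemma polyexp_cmult: "polyexp f \<Longrightarrow> polyexp (\<lambda>x. c * f x)"
  using polyexp_mult[OF polyexp_const] .

lemma polyexp_sum: "(\<And>i. i \<in> A \<Longrightarrow> polyexp (f i)) \<Longrightarrow> polyexp (\<lambda>x. \<Sum>i\<in>A. f i x)"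
  by (induction A rule: infinite_finite_induct) (auto simp: polyexp_const polyexp_add)

lemma polyexp_prod: "(\<And>i. i \<in> A \<Longrightarrow> polyexp (f i)) \<Longrightarrow> polyexp (\<lambda>x. \<Prod>i\<in>A. f i x)"
  by (induction A rule: infinite_finite_induct) (auto simp: polyexp_const polyexp_mult)

lemma polyexp_if: "polyexp f \<Longrightarrow> polyexp (\<lambda>x. if b then f x else 0)"
  by (cases b) (simp_all add: polyexp_const)

lemma polyexp_power: "polyexp f \<Longrightarrow> polyexp (\<lambda>x. f x ^ k)"
  by (induction k) (auto simp: polyexp_const polyexp_mult)

lemma det_mat_eq_sum_permutes:
  "det (mat n n E) = (\<Sum>p | p permutes {0..<n}. signof p * (\<Prod>i = 0..<n. E (i, p i)))"
  by (subst det_def'[of _ n]) (auto intro!: sum.cong prod.cong simp: permutes_def)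

lemma polyexp_det:
  assumes "\<And>i j. i < n \<Longrightarrow> j < n \<Longrightarrow> polyexp (E i j)"
  shows "polyexp (\<lambda>x. det (mat n n (\<lambda>(i, j). E i j x)))"
  unfolding det_mat_eq_sum_permutes
  using assms by (intro polyexp_sum polyexp_cmult polyexp_prod) (auto simp: permutes_def)

lemma holomorphic_on_det:
  assumes "\<And>i j. i < n \<Longrightarrow> j < n \<Longrightarrow> E i j holomorphic_on S"
  shows "(\<lambda>x. det (mat n n (\<lambda>(i, j). E i j x))) holomorphic_on S"
  unfolding det_mat_eq_sum_permutes
  using assms by (intro holomorphic_intros) (auto simp: permutes_def)

section \<open>Exponential sums and the operators \<open>\<partial> - \<mu>\<close>\<close>

definition exp_sum :: "complex set \<Rightarrow> (complex \<Rightarrow> complex poly) \<Rightarrow> complex \<Rightarrow> complex" where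
  "exp_sum L q = (\<lambda>x. \<Sum>l\<in>L. poly (q l) x * exp (l * x))"

definition deriv_shift :: "complex \<Rightarrow> (complex \<Rightarrow> complex) \<Rightarrow> complex \<Rightarrow> complex" where
  "deriv_shift \<mu> f = (\<lambda>x. deriv f x - \<mu> * f x)"

lemma polyexp_exp_sum: "polyexp (exp_sum L q)"
  unfolding exp_sum_def by (intro polyexp_sum polyexp_poly_exp)

lemma deriv_shift_exp_sum:
  "deriv_shift \<mu> (exp_sum L q) = exp_sum L (\<lambda>l. pderiv_shift (l - \<mu>) (q l))"
proof
  fix x
  have "(exp_sum L q has_field_derivative exp_sum L (\<lambda>l. pderiv_shift l (q l)) x) (at x)"
    unfolding exp_sum_def by (intro DERIV_sum has_field_derivative_poly_exp)
  then show "deriv_shift \<mu> (exp_sum L q) x = exp_sum L (\<lambda>l. pderiv_shift (l - \<mu>) (q l)) x"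
    unfolding deriv_shift_def exp_sum_def pderiv_shift_def
    by (simp add: DERIV_imp_deriv sum_distrib_left sum_subtractf[symmetric] algebra_simps)
qed

lemma foldr_deriv_shift_exp_sum:
  "foldr deriv_shift \<mu>s (exp_sum L q) = exp_sum L (\<lambda>l. foldr (\<lambda>\<mu>. pderiv_shift (l - \<mu>)) \<mu>s (q l))"
  by (induction \<mu>s) (auto simp: deriv_shift_exp_sum)

lemma foldr_deriv_shift_0: "foldr deriv_shift \<mu>s (\<lambda>_. 0) = (\<lambda>_. 0)"
  by (induction \<mu>s) (simp_all add: deriv_shift_def)

lemma pderiv_shift_0 [simp]: "pderiv_shift 0 p = pderiv p"
  by (simp add: pderiv_shift_def)

lemma pderiv_shift_0_right [simp]: "pderiv_shift a 0 = 0"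
  by (simp add: pderiv_shift_def)

lemma pderiv_shift_eq_0_iff:
  assumes "a \<noteq> 0"
  shows "pderiv_shift a p = 0 \<longleftrightarrow> p = 0"
proof
  assume p: "pderiv_shift a p = 0"
  have "coeff (pderiv_shift a p) (degree p) = a * lead_coeff p"
    by (simp add: pderiv_shift_def coeff_pderiv coeff_eq_0)
  then show "p = 0"
    using p assms by simp
qed (simp add: pderiv_shift_def)

lemma degree_pderiv_shift_le: "degree (pderiv_shift a p) \<le> degree p"
  unfolding pderiv_shift_def
  by (metis degree_add_le degree_pderiv degree_smult_le diff_le_self)

lemma foldr_pderiv_shift_eq_0_iff:
  "l \<notin> set \<mu>s \<Longrightarrow> foldr (\<lambda>\<mu>. pderiv_shift (l - \<mu>)) \<mu>s p = 0 \<longleftrightarrow> p = 0"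
  by (induction \<mu>s) (auto simp: pderiv_shift_eq_0_iff)

lemma foldr_pderiv_shift_degree:
  "foldr (\<lambda>\<mu>. pderiv_shift (l - \<mu>)) \<mu>s p = 0 \<or>
   degree (foldr (\<lambda>\<mu>. pderiv_shift (l - \<mu>)) \<mu>s p) + count_list \<mu>s l \<le> degree p"
proof (induction \<mu>s)
  case (Cons \<mu> \<mu>s)
  define s where "s = foldr (\<lambda>\<mu>. pderiv_shift (l - \<mu>)) \<mu>s p"
  show ?case
  proof (cases "s = 0 \<or> \<mu> \<noteq> l")
    case True
    then show ?thesis
      using Cons.IH degree_pderiv_shift_le[of "l - \<mu>" s] by (auto simp: s_def[symmetric])
  next
    case False
    then show ?thesis
      using Cons.IH by (cases "degree s") (auto simp: s_def[symmetric] pderiv_eq_0_iff degree_pderiv)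
  qed
qed simp

lemma count_list_replicate [simp]: "count_list (replicate k a) l = (if a = l then k else 0)"
  by (induction k) auto

lemma foldr_pderiv_shift_eq_0:
  "degree p < count_list \<mu>s l \<Longrightarrow> foldr (\<lambda>\<mu>. pderiv_shift (l - \<mu>)) \<mu>s p = 0"
  using foldr_pderiv_shift_degree[of l \<mu>s p] by auto

text \<open>Applying \<open>(\<partial> - l\<^sub>0)\<^sup>d\<^sup>+\<^sup>1\<close> with \<open>d = degree (q l\<^sub>0)\<close> removes the \<open>l\<^sub>0\<close>-term and acts
  injectively on the others.\<close>

lemma exp_sum_eq_0_imp:
  assumes "finite L" and "exp_sum L q = (\<lambda>_. 0)" and "l \<in> L"
  shows "q l = 0"
  using assms
proof (induction L arbitrary: q l rule: finite_induct)
  case (insert l\<^sub>0 L)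
  define \<mu>s where "\<mu>s = replicate (Suc (degree (q l\<^sub>0))) l\<^sub>0"
  define r where "r = (\<lambda>l. foldr (\<lambda>\<mu>. pderiv_shift (l - \<mu>)) \<mu>s (q l))"
  have "r l\<^sub>0 = 0"
    unfolding r_def by (rule foldr_pderiv_shift_eq_0) (simp add: \<mu>s_def)
  moreover have "exp_sum (insert l\<^sub>0 L) r = (\<lambda>_. 0)"
    using insert.prems foldr_deriv_shift_exp_sum[of \<mu>s "insert l\<^sub>0 L" q]
    by (simp add: r_def foldr_deriv_shift_0)
  ultimately have "exp_sum L r = (\<lambda>_. 0)"
    using insert.hyps by (simp add: exp_sum_def)
  then have "r l = 0" if "l \<in> L" for l
    using insert.IH that by blast
  then have qL: "q l = 0" if "l \<in> L" for l
    using that insert.hyps foldr_pderiv_shift_eq_0_iff[of l \<mu>s "q l"]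
    by (auto simp: r_def \<mu>s_def)
  have "poly (q l\<^sub>0) x = 0" for x
    using fun_cong[OF insert.prems(1), of x] insert.hyps qL by (simp add: exp_sum_def)
  then have "q l\<^sub>0 = 0"
    using poly_all_0_iff_0 by blast
  then show ?case
    using insert.prems qL by auto
qed simp

section \<open>The functions \<open>c[e\<^sup>x\<^sup>z]\<close>\<close>

lemma higher_deriv_exp_mult: "(deriv ^^ m) (\<lambda>z. exp (x * z)) = (\<lambda>z. x ^ m * exp (x * z))"
proof (induction m)
  case (Suc m)
  have "deriv (\<lambda>z. x ^ m * exp (x * z)) = (\<lambda>z. x ^ Suc m * exp (x * z))"
    by (rule ext, rule DERIV_imp_deriv) (auto intro!: derivative_eq_intros simp: algebra_simps)
  then show ?case
    by (simp only: funpow.simps o_apply Suc.IH)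
qed simp

lemma dist_exp_eq_sum:
  assumes "finite S" and "{p. c p \<noteq> 0} \<subseteq> S"
  shows "dist_exp c x = (\<Sum>p\<in>S. c p * x ^ snd p * exp (fst p * x))"
proof -
  have "dist_exp c x = (\<Sum>p | c p \<noteq> 0. c p * x ^ snd p * exp (fst p * x))"
    unfolding dist_exp_def apply_dist_def higher_deriv_exp_mult
    by (auto simp: algebra_simps intro!: sum.cong)
  also have "\<dots> = (\<Sum>p\<in>S. c p * x ^ snd p * exp (fst p * x))"
    using assms by (intro sum.mono_neutral_left) auto
  finally show ?thesis .
qed

definition exp_coeff :: "(complex \<times> nat) set \<Rightarrow> (complex \<times> nat \<Rightarrow> complex) \<Rightarrow> complex \<Rightarrow> complex poly" where
  "exp_coeff S d l = (\<Sum>p | p \<in> S \<and> fst p = l. monom (d p) (snd p))"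

lemma sum_monom_exp_eq_exp_sum:
  fixes S :: "(complex \<times> nat) set"
  assumes "finite S"
  shows "(\<Sum>p\<in>S. d p * x ^ snd p * exp (fst p * x)) = exp_sum (fst ` S) (exp_coeff S d) x"
proof -
  have "(\<Sum>p\<in>S. d p * x ^ snd p * exp (fst p * x)) =
      (\<Sum>l\<in>fst ` S. \<Sum>p | p \<in> S \<and> fst p = l. d p * x ^ snd p * exp (fst p * x))"
    by (rule sum.image_gen[OF assms])
  also have "\<dots> = exp_sum (fst ` S) (exp_coeff S d) x"
    unfolding exp_sum_def exp_coeff_def poly_sum
    by (intro sum.cong refl) (auto simp: sum_distrib_right poly_monom intro!: sum.cong)
  finally show ?thesis .
qed

lemma coeff_exp_coeff:
  assumes "finite S" and "(l, m) \<in> S"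
  shows "coeff (exp_coeff S d l) m = d (l, m)"
proof -
  have "coeff (exp_coeff S d l) m = (\<Sum>p | p \<in> S \<and> fst p = l. if p = (l, m) then d p else 0)"
    unfolding exp_coeff_def coeff_sum coeff_monom by (intro sum.cong) (auto simp: prod_eq_iff)
  also have "\<dots> = d (l, m)"
    using assms by (subst sum.delta) auto
  finally show ?thesis .
qed

lemma degree_exp_coeff_le:
  assumes "finite S" and "\<And>p. p \<in> S \<Longrightarrow> snd p \<le> R"
  shows "degree (exp_coeff S d l) \<le> R"
  unfolding exp_coeff_def
  using assms by (intro degree_sum_le) (auto intro: order.trans[OF degree_monom_le])

lemma sum_monom_exp_eq_0_imp:
  fixes S :: "(complex \<times> nat) set"
  assumes "finite S" and "\<And>x. (\<Sum>p\<in>S. d p * x ^ snd p * exp (fst p * x)) = 0" and "p \<in> S"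
  shows "d p = 0"
proof -
  have "exp_sum (fst ` S) (exp_coeff S d) = (\<lambda>_. 0)"
    using assms(2) sum_monom_exp_eq_exp_sum[OF assms(1)] by auto
  then have "exp_coeff S d (fst p) = 0"
    using assms(1,3) by (intro exp_sum_eq_0_imp) auto
  then show ?thesis
    using coeff_exp_coeff[OF assms(1), of "fst p" "snd p" d] assms(3) by simp
qed

lemma dist_exp_eq_exp_sum:
  assumes "finite S" and "{p. c p \<noteq> 0} \<subseteq> S"
  shows "dist_exp c = exp_sum (fst ` S) (exp_coeff S c)"
  by (rule ext) (simp only: dist_exp_eq_sum[OF assms] sum_monom_exp_eq_exp_sum[OF assms(1)])

lemma dist_exp_linearly_independent:
  fixes c :: "nat \<Rightarrow> complex \<times> nat \<Rightarrow> complex"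
  assumes dist: "\<And>i. i < n \<Longrightarrow> is_dist (c i)"
    and indep: "\<And>a. (\<And>p. (\<Sum>i<n. a i * c i p) = 0) \<Longrightarrow> (\<forall>i<n. a i = 0)"
    and zero: "\<And>x. (\<Sum>i<n. a i * dist_exp (c i) x) = 0"
  shows "\<forall>i<n. a i = 0"
proof (rule indep)
  define S where "S = (\<Union>i<n. {p. c i p \<noteq> 0})"
  have S: "finite S"
    using dist unfolding S_def is_dist_def by (intro finite_UN_I) simp_all
  have sup: "{p. c i p \<noteq> 0} \<subseteq> S" if "i < n" for i
    using that by (auto simp: S_def)
  have "(\<Sum>p\<in>S. (\<Sum>i<n. a i * c i p) * x ^ snd p * exp (fst p * x)) = 0" for x
  proof -
    have "(\<Sum>p\<in>S. (\<Sum>i<n. a i * c i p) * x ^ snd p * exp (fst p * x)) =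
        (\<Sum>i<n. \<Sum>p\<in>S. a i * (c i p * x ^ snd p * exp (fst p * x)))"
      by (subst sum.swap) (simp add: sum_distrib_right mult.assoc)
    also have "\<dots> = (\<Sum>i<n. a i * dist_exp (c i) x)"
      by (intro sum.cong refl) (simp add: dist_exp_eq_sum[OF S sup] sum_distrib_left)
    finally show ?thesis
      using zero by simp
  qed
  then show "(\<Sum>i<n. a i * c i p) = 0" for p
  proof (cases "p \<in> S")
    case False
    then show ?thesis
      by (simp add: S_def)
  qed (rule sum_monom_exp_eq_0_imp[OF S])
qed

section \<open>Constant coefficient operators\<close>

lemma apply_op_map_upt: "apply_op (map a [0..<m]) f x = (\<Sum>i<m. a i x * (deriv ^^ i) f x)"
  unfolding apply_op_def by (intro sum.cong) simp_all

definition poly_deriv_op :: "complex poly \<Rightarrow> (complex \<Rightarrow> complex) \<Rightarrow> complex \<Rightarrow> complex" where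
  "poly_deriv_op P f = (\<lambda>x. \<Sum>i\<le>degree P. coeff P i * (deriv ^^ i) f x)"

lemma ex_coeffs_nonzero: "P \<noteq> 0 \<Longrightarrow> \<exists>i<length (coeffs P). coeffs P ! i \<noteq> 0"
  by (intro exI[of _ "degree P"]) (simp add: length_coeffs_degree coeffs_nth)

lemma poly_deriv_op_eq_sum_lessThan:
  assumes "degree P < K"
  shows "poly_deriv_op P f x = (\<Sum>i<K. coeff P i * (deriv ^^ i) f x)"
  unfolding poly_deriv_op_def
  using assms by (intro sum.mono_neutral_left) (auto simp: coeff_eq_0)

lemma apply_const_op_coeffs: "apply_const_op (coeffs P) f = poly_deriv_op P f"
proof (cases "P = 0")
  case False
  then show ?thesis
    unfolding apply_const_op_def poly_deriv_op_def
    by (auto simp: length_coeffs_degree coeffs_nth lessThan_Suc_atMost[symmetric] intro!: sum.cong)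
qed (simp add: apply_const_op_def poly_deriv_op_def fun_eq_iff)

lemma coeff_linear_factor_mult:
  fixes P :: "'a::comm_ring_1 poly"
  shows "coeff ([:-\<mu>, 1:] * P) i = (case i of 0 \<Rightarrow> 0 | Suc j \<Rightarrow> coeff P j) - \<mu> * coeff P i"
  by (cases i) (simp_all add: mult_pCons_left coeff_pCons algebra_simps)

lemma poly_deriv_op_linear_factor:
  assumes f: "f holomorphic_on UNIV"
  shows "poly_deriv_op ([:-\<mu>, 1:] * P) f = deriv_shift \<mu> (poly_deriv_op P f)"
proof
  fix x
  define K where "K = Suc (degree P)"
  have P: "poly_deriv_op P f = (\<lambda>x. \<Sum>i<K. coeff P i * (deriv ^^ i) f x)"
    by (rule ext, rule poly_deriv_op_eq_sum_lessThan) (simp add: K_def)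
  have "(poly_deriv_op P f has_field_derivative (\<Sum>i<K. coeff P i * (deriv ^^ Suc i) f x)) (at x)"
    unfolding P by (intro DERIV_sum DERIV_cmult has_field_derivative_higher_deriv[OF f]) auto
  then have "deriv_shift \<mu> (poly_deriv_op P f) x =
      (\<Sum>i<K. coeff P i * (deriv ^^ Suc i) f x) - \<mu> * (\<Sum>i<K. coeff P i * (deriv ^^ i) f x)"
    unfolding deriv_shift_def P by (simp add: DERIV_imp_deriv)
  also have "(\<Sum>i<K. coeff P i * (deriv ^^ Suc i) f x) =
      (\<Sum>i<Suc K. (case i of 0 \<Rightarrow> 0 | Suc j \<Rightarrow> coeff P j) * (deriv ^^ i) f x)"
    by (subst sum.lessThan_Suc_shift) simp
  also have "(\<Sum>i<K. coeff P i * (deriv ^^ i) f x) = (\<Sum>i<Suc K. coeff P i * (deriv ^^ i) f x)"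
    by (simp add: K_def coeff_eq_0)
  also have "(\<Sum>i<Suc K. (case i of 0 \<Rightarrow> 0 | Suc j \<Rightarrow> coeff P j) * (deriv ^^ i) f x) -
      \<mu> * (\<Sum>i<Suc K. coeff P i * (deriv ^^ i) f x) =
      (\<Sum>i<Suc K. coeff ([:-\<mu>, 1:] * P) i * (deriv ^^ i) f x)"
    unfolding coeff_linear_factor_mult
    by (simp add: left_diff_distrib sum_subtractf sum_distrib_left mult.assoc del: sum.lessThan_Suc)
  also have "\<dots> = poly_deriv_op ([:-\<mu>, 1:] * P) f x"
    using degree_mult_le[of "[:-\<mu>, 1:]" P]
    by (intro poly_deriv_op_eq_sum_lessThan[symmetric]) (simp add: K_def)
  finally show "poly_deriv_op ([:-\<mu>, 1:] * P) f x = deriv_shift \<mu> (poly_deriv_op P f) x" ..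
qed

lemma poly_deriv_op_1 [simp]: "poly_deriv_op 1 f = f"
  by (simp add: poly_deriv_op_def fun_eq_iff)

lemma poly_deriv_op_prod_linear_factors:
  assumes "f holomorphic_on UNIV"
  shows "poly_deriv_op (\<Prod>\<mu>\<leftarrow>\<mu>s. [:-\<mu>, 1:]) f = foldr deriv_shift \<mu>s f"
  by (induction \<mu>s) (simp_all add: poly_deriv_op_linear_factor[OF assms] del: mult_pCons_left)

lemma prod_linear_factors_nonzero: "(\<Prod>\<mu>\<leftarrow>\<mu>s. [:-\<mu>, 1:]) \<noteq> (0 :: 'a::idom poly)"
  by (auto simp: prod_list_zero_iff)

lemma degree_prod_linear_factors: "degree (\<Prod>\<mu>\<leftarrow>\<mu>s. [:-\<mu>, 1:] :: 'a::idom poly) = length \<mu>s"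
proof (induction \<mu>s)
  case (Cons \<mu> \<mu>s)
  then show ?case
    using degree_mult_eq[of "[:-\<mu>, 1:]" "\<Prod>\<mu>\<leftarrow>\<mu>s. [:-\<mu>, 1:]"] prod_linear_factors_nonzero[of \<mu>s]
    by (simp del: mult_pCons_left)
qed simp

text \<open>The operator \<open>\<partial>\<^sup>d \<Prod>\<^bsub>l\<in>L\<^esub> (\<partial> - l)\<^sup>R\<^sup>+\<^sup>1\<close>.\<close>

lemma exists_poly_deriv_op_annihilating_exp_sums:
  assumes "finite L"
  shows "\<exists>P. P \<noteq> 0 \<and> d \<le> degree P \<and>
    (\<forall>q. (\<forall>l\<in>L. degree (q l) \<le> R) \<longrightarrow> poly_deriv_op P (exp_sum L q) = (\<lambda>_. 0))"
proof -
  obtain ls where ls: "set ls = L"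
    using finite_list[OF assms] by blast
  define \<mu>s where "\<mu>s = concat (map (\<lambda>l. replicate (Suc R) l) ls) @ replicate d 0"
  define P where "P = (\<Prod>\<mu>\<leftarrow>\<mu>s. [:-\<mu>, 1:])"
  have count: "Suc R \<le> count_list \<mu>s l" if "l \<in> L" for l
  proof -
    have "Suc R \<le> count_list (concat (map (\<lambda>l. replicate (Suc R) l) xs)) l" if "l \<in> set xs" for xs
      using that by (induction xs) auto
    then have "Suc R \<le> count_list (concat (map (\<lambda>l. replicate (Suc R) l) ls)) l"
      using ls that by blast
    also have "\<dots> \<le> count_list \<mu>s l"
      by (simp add: \<mu>s_def)
    finally show ?thesis .
  qed
  have "poly_deriv_op P (exp_sum L q) = (\<lambda>_. 0)" if q: "\<forall>l\<in>L. degree (q l) \<le> R" for q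
  proof -
    have "poly_deriv_op P (exp_sum L q) = exp_sum L (\<lambda>l. foldr (\<lambda>\<mu>. pderiv_shift (l - \<mu>)) \<mu>s (q l))"
      unfolding P_def
      by (simp add: poly_deriv_op_prod_linear_factors polyexp_holomorphic polyexp_exp_sum
          foldr_deriv_shift_exp_sum)
    also have "\<dots> = exp_sum L (\<lambda>_. 0)"
    proof -
      have "foldr (\<lambda>\<mu>. pderiv_shift (l - \<mu>)) \<mu>s (q l) = 0" if "l \<in> L" for l
        using q count[OF that] that by (intro foldr_pderiv_shift_eq_0) fastforce
      then show ?thesis
        unfolding exp_sum_def by (intro ext sum.cong) simp_all
    qed
    finally show ?thesis
      by (simp add: exp_sum_def)
  qed
  moreover have "d \<le> degree P"
    unfolding P_def degree_prod_linear_factors by (simp add: \<mu>s_def)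
  ultimately show ?thesis
    using prod_linear_factors_nonzero unfolding P_def by blast
qed

section \<open>Wronskians\<close>

lemma sum_mult_cofactor_row:
  assumes A: "A \<in> carrier_mat n n" and i: "i < n" and j: "j < n"
  shows "(\<Sum>k<n. A $$ (i, k) * cofactor A j k) = (if i = j then det A else 0)"
proof -
  have "(A * adj_mat A) $$ (i, j) = (det A \<cdot>\<^sub>m 1\<^sub>m n) $$ (i, j)"
    using adj_mat(2)[OF A] by simp
  moreover have "(A * adj_mat A) $$ (i, j) = (\<Sum>k<n. A $$ (i, k) * cofactor A j k)"
    using A i j adj_mat(1)[OF A]
    by (auto simp: index_mult_mat scalar_prod_def adj_mat_def atLeast0LessThan intro!: sum.cong)
  ultimately show ?thesis
    using i j by simp
qed

lemma sum_cofactor_mult_col: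
  assumes A: "A \<in> carrier_mat n n" and i: "i < n" and j: "j < n"
  shows "(\<Sum>k<n. cofactor A k i * A $$ (k, j)) = (if i = j then det A else 0)"
proof -
  have "(adj_mat A * A) $$ (i, j) = (det A \<cdot>\<^sub>m 1\<^sub>m n) $$ (i, j)"
    using adj_mat(3)[OF A] by simp
  moreover have "(adj_mat A * A) $$ (i, j) = (\<Sum>k<n. cofactor A k i * A $$ (k, j))"
    using A i j adj_mat(1)[OF A]
    by (auto simp: index_mult_mat scalar_prod_def adj_mat_def atLeast0LessThan intro!: sum.cong)
  ultimately show ?thesis
    using i j by simp
qed

lemma det_nonzero_mult_vec_eq_0:
  fixes A :: "'a::idom mat"
  assumes A: "A \<in> carrier_mat n n" and "det A \<noteq> 0"
    and v: "\<And>i. i < n \<Longrightarrow> (\<Sum>j<n. A $$ (i, j) * v j) = 0" and "s < n"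
  shows "v s = 0"
proof -
  have "det A * v s = (\<Sum>j<n. if s = j then det A * v j else 0)"
    using \<open>s < n\<close> by simp
  also have "\<dots> = (\<Sum>j<n. (\<Sum>k<n. cofactor A k s * A $$ (k, j)) * v j)"
    using \<open>s < n\<close> by (intro sum.cong refl) (auto simp: sum_cofactor_mult_col[OF A])
  also have "\<dots> = (\<Sum>k<n. cofactor A k s * (\<Sum>j<n. A $$ (k, j) * v j))"
    by (simp add: sum_distrib_left sum_distrib_right mult.assoc) (rule sum.swap)
  also have "\<dots> = 0"
    using v by simp
  finally show ?thesis
    using \<open>det A \<noteq> 0\<close> by simp
qed

lemma det_nonzero_vec_mult_eq_0:
  fixes A :: "'a::idom mat"
  assumes A: "A \<in> carrier_mat n n" and "det A \<noteq> 0"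
    and r: "\<And>j. j < n \<Longrightarrow> (\<Sum>i<n. r i * A $$ (i, j)) = 0" and "s < n"
  shows "r s = 0"
proof -
  have "det A * r s = (\<Sum>i<n. if s = i then det A * r i else 0)"
    using \<open>s < n\<close> by simp
  also have "\<dots> = (\<Sum>i<n. r i * (\<Sum>k<n. A $$ (i, k) * cofactor A s k))"
    using \<open>s < n\<close> by (intro sum.cong refl) (auto simp: sum_mult_cofactor_row[OF A])
  also have "\<dots> = (\<Sum>k<n. (\<Sum>i<n. r i * A $$ (i, k)) * cofactor A s k)"
    by (simp add: sum_distrib_left sum_distrib_right mult.assoc) (rule sum.swap)
  also have "\<dots> = 0"
    using r by simp
  finally show ?thesis
    using \<open>det A \<noteq> 0\<close> by simp
qed

lemma mat_delete_mat:
  "mat_delete (mat (Suc m) (Suc m) F) k s =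
    mat m m (\<lambda>(i, j). F (if i < k then i else Suc i, if j < s then j else Suc j))"
  unfolding mat_delete_def by (rule eq_matI) auto

definition wronskian_mat :: "nat \<Rightarrow> (nat \<Rightarrow> complex \<Rightarrow> complex) \<Rightarrow> complex \<Rightarrow> complex mat" where
  "wronskian_mat m gs x = mat m m (\<lambda>(i, j). (deriv ^^ i) (gs j) x)"

lemma wronskian_eq_det: "wronskian m gs x = det (wronskian_mat m gs x)"
  unfolding wronskian_def wronskian_mat_def ..

lemma wronskian_mat_carrier [simp]: "wronskian_mat m gs x \<in> carrier_mat m m"
  by (simp add: wronskian_mat_def)

lemma index_wronskian_mat [simp]:
  "i < m \<Longrightarrow> j < m \<Longrightarrow> wronskian_mat m gs x $$ (i, j) = (deriv ^^ i) (gs j) x"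
  by (simp add: wronskian_mat_def)

lemma cofactor_wronskian_mat_last:
  "cofactor (wronskian_mat (Suc m) gs x) m m = wronskian m gs x"
proof -
  have "mat_delete (wronskian_mat (Suc m) gs x) m m = wronskian_mat m gs x"
    unfolding mat_delete_def wronskian_mat_def by (rule eq_matI) auto
  then show ?thesis
    by (simp add: cofactor_def wronskian_eq_det)
qed

lemma holomorphic_cofactor_wronskian_mat:
  assumes "\<And>j. j < Suc m \<Longrightarrow> gs j holomorphic_on UNIV"
  shows "(\<lambda>x. cofactor (wronskian_mat (Suc m) gs x) m j) holomorphic_on UNIV"
proof -
  have "mat_delete (wronskian_mat (Suc m) gs x) m j =
      mat m m (\<lambda>(i, k). (deriv ^^ i) (gs (if k < j then k else Suc k)) x)" for x
    unfolding mat_delete_def wronskian_mat_def by (rule eq_matI) auto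
  then show ?thesis
    unfolding cofactor_def
    using assms by (auto intro!: holomorphic_intros holomorphic_on_det)
qed

text \<open>Expanding along the last row a Wronskian matrix whose last row has been replaced by an
  earlier one.\<close>

lemma sum_higher_deriv_mult_cofactor_wronskian_mat:
  assumes "i \<le> m"
  shows "(\<Sum>j<Suc m. (deriv ^^ i) (gs j) x * cofactor (wronskian_mat (Suc m) gs x) m j) =
    (if i = m then wronskian (Suc m) gs x else 0)"
  using sum_mult_cofactor_row[OF wronskian_mat_carrier, of i "Suc m" m gs x] assms
  by (simp add: wronskian_eq_det)

lemma sum_higher_deriv_mult_deriv_eq_0:
  assumes "finite J"
    and holo: "\<And>j. j \<in> J \<Longrightarrow> g j holomorphic_on UNIV" "\<And>j. j \<in> J \<Longrightarrow> b j holomorphic_on UNIV"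
    and rel: "\<And>x. (\<Sum>j\<in>J. (deriv ^^ i) (g j) x * b j x) = 0"
    and rel_Suc: "\<And>x. (\<Sum>j\<in>J. (deriv ^^ Suc i) (g j) x * b j x) = 0"
  shows "(\<Sum>j\<in>J. (deriv ^^ i) (g j) x * deriv (b j) x) = 0"
proof -
  have "((\<lambda>x. \<Sum>j\<in>J. (deriv ^^ i) (g j) x * b j x) has_field_derivative
      (\<Sum>j\<in>J. (deriv ^^ Suc i) (g j) x * b j x + deriv (b j) x * (deriv ^^ i) (g j) x)) (at x)"
    using holo
    by (intro DERIV_sum DERIV_mult has_field_derivative_higher_deriv[of _ UNIV]
        holomorphic_derivI[of _ UNIV]) auto
  moreover have "((\<lambda>x. \<Sum>j\<in>J. (deriv ^^ i) (g j) x * b j x) has_field_derivative 0) (at x)"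
    unfolding rel by simp
  ultimately have "(\<Sum>j\<in>J. (deriv ^^ Suc i) (g j) x * b j x + deriv (b j) x * (deriv ^^ i) (g j) x) = 0"
    by (rule DERIV_unique)
  then show ?thesis
    using rel_Suc[of x] by (simp add: sum.distrib mult.commute)
qed

lemma proportional_if_wronskian2_eq_0:
  assumes "f holomorphic_on S" "g holomorphic_on S" "open S" "convex S" "x\<^sub>0 \<in> S" "y \<in> S"
    and g: "\<And>y. y \<in> S \<Longrightarrow> g y \<noteq> 0"
    and W: "\<And>y. y \<in> S \<Longrightarrow> g y * deriv f y - deriv g y * f y = 0"
  shows "f y = f x\<^sub>0 / g x\<^sub>0 * g y"
proof -
  have "((\<lambda>y. f y / g y) has_field_derivative 0) (at y within S)" if "y \<in> S" for y
  proof -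
    have "((\<lambda>y. f y / g y) has_field_derivative (deriv f y * g y - f y * deriv g y) / (g y * g y))
        (at y within S)"
      using assms that by (intro DERIV_divide holomorphic_derivI[of _ S]) auto
    then show ?thesis
      using W[OF that] by (simp add: algebra_simps)
  qed
  then obtain k where "\<And>y. y \<in> S \<Longrightarrow> f y / g y = k"
    using has_field_derivative_zero_constant[OF \<open>convex S\<close>] by metis
  then show ?thesis
    using assms g by (simp add: field_simps)
qed

text \<open>If \<open>W(g\<^sub>0, \<dots>, g\<^sub>m) \<equiv> 0\<close> but \<open>W(g\<^sub>0, \<dots>, g\<^sub>m\<^sub>-\<^sub>1)(x\<^sub>0) \<noteq> 0\<close>, the cofactors \<open>b\<^sub>j\<close> of the last row
  satisfy \<open>\<Sum>\<^sub>j g\<^sub>j\<^sup>(\<^sup>i\<^sup>) b\<^sub>j = 0\<close> for \<open>i \<le> m\<close>; differentiating shows that the Wronskians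
  \<open>b\<^sub>m b\<^sub>j' - b\<^sub>m' b\<^sub>j\<close> vanish near \<open>x\<^sub>0\<close>, so all \<open>b\<^sub>j\<close> are proportional to \<open>b\<^sub>m\<close> there.\<close>

lemma wronskian_Suc_eq_0_imp_locally_dependent:
  assumes holo: "\<And>j. j < Suc m \<Longrightarrow> gs j holomorphic_on UNIV"
    and W: "\<And>x. wronskian (Suc m) gs x = 0" and x\<^sub>0: "wronskian m gs x\<^sub>0 \<noteq> 0"
  obtains a e where "e > 0" "a m = 1" "\<And>y. y \<in> ball x\<^sub>0 e \<Longrightarrow> (\<Sum>j<Suc m. a j * gs j y) = 0"
proof -
  define b where "b j x = cofactor (wronskian_mat (Suc m) gs x) m j" for j x
  have b_holo: "b j holomorphic_on UNIV" for j
    unfolding b_def[abs_def] using holo by (rule holomorphic_cofactor_wronskian_mat)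
  have b_m: "b m x = wronskian m gs x" for x
    by (simp add: b_def cofactor_wronskian_mat_last)
  have rel: "(\<Sum>j<Suc m. (deriv ^^ i) (gs j) x * b j x) = 0" if "i \<le> m" for i x
    using sum_higher_deriv_mult_cofactor_wronskian_mat[OF that] W by (simp add: b_def)
  have rel': "(\<Sum>j<Suc m. (deriv ^^ i) (gs j) y * deriv (b j) y) = 0" if "i < m" for i y
  proof (rule sum_higher_deriv_mult_deriv_eq_0)
    show "(\<Sum>j<Suc m. (deriv ^^ i) (gs j) x * b j x) = 0"
      and "(\<Sum>j<Suc m. (deriv ^^ Suc i) (gs j) x * b j x) = 0" for x
      using that by (intro rel; simp)+
  qed (use holo b_holo in auto)
  have "continuous (at x\<^sub>0) (b m)"
    using b_holo[of m] holomorphic_on_imp_continuous_on continuous_on_eq_continuous_at by blast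
  then obtain e where e: "e > 0" and b_m_nonzero: "\<And>y. y \<in> ball x\<^sub>0 e \<Longrightarrow> b m y \<noteq> 0"
    using continuous_at_avoid[of x\<^sub>0 "b m" 0] x\<^sub>0 b_m by (auto simp: dist_commute)
  have wr2: "b m y * deriv (b j) y - deriv (b m) y * b j y = 0"
    if y: "y \<in> ball x\<^sub>0 e" and j: "j < Suc m" for y j
  proof (cases "j < m")
    case True
    show ?thesis
    proof (rule det_nonzero_mult_vec_eq_0[OF wronskian_mat_carrier, of m gs y _ j])
      show "det (wronskian_mat m gs y) \<noteq> 0"
        using b_m_nonzero[OF y] by (simp add: b_m wronskian_eq_det)
      fix i assume "i < m"
      have "(\<Sum>j<m. (deriv ^^ i) (gs j) y * (b m y * deriv (b j) y - deriv (b m) y * b j y)) =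
        b m y * (\<Sum>j<Suc m. (deriv ^^ i) (gs j) y * deriv (b j) y) -
        deriv (b m) y * (\<Sum>j<Suc m. (deriv ^^ i) (gs j) y * b j y)"
        by (simp add: sum_distrib_left sum_subtractf algebra_simps)
      then show "(\<Sum>j<m. wronskian_mat m gs y $$ (i, j) *
          (b m y * deriv (b j) y - deriv (b m) y * b j y)) = 0"
        using rel' rel \<open>i < m\<close> by simp
    qed (use True in simp)
  next
    case False
    then have "j = m"
      using j by simp
    then show ?thesis
      by (simp add: mult.commute)
  qed
  define a where "a j = b j x\<^sub>0 / b m x\<^sub>0" for j
  have b_prop: "b j y = a j * b m y" if "y \<in> ball x\<^sub>0 e" "j < Suc m" for j y
    unfolding a_def
  proof (rule proportional_if_wronskian2_eq_0[of "b j" "ball x\<^sub>0 e" "b m"])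
    show "b m z * deriv (b j) z - deriv (b m) z * b j z = 0" if "z \<in> ball x\<^sub>0 e" for z
      using wr2 that \<open>j < Suc m\<close> by blast
    show "b j holomorphic_on ball x\<^sub>0 e" "b m holomorphic_on ball x\<^sub>0 e"
      using b_holo by (auto intro: holomorphic_on_subset)
  qed (use e that b_m_nonzero in simp_all)
  show ?thesis
  proof
    show "a m = 1"
      using b_m_nonzero[of x\<^sub>0] e by (simp add: a_def)
    fix y assume y: "y \<in> ball x\<^sub>0 e"
    have "b m y * (\<Sum>j<Suc m. a j * gs j y) = (\<Sum>j<Suc m. gs j y * b j y)"
      unfolding sum_distrib_left
    proof (intro sum.cong refl)
      fix j assume "j \<in> {..<Suc m}"
      then have "b j y = a j * b m y"
        by (intro b_prop[OF y]) simp
      then show "b m y * (a j * gs j y) = gs j y * b j y"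
        by (simp only: mult_ac)
    qed
    also have "\<dots> = 0"
      using rel[of 0 y] by simp
    finally show "(\<Sum>j<Suc m. a j * gs j y) = 0"
      using b_m_nonzero[OF y] by simp
  qed (rule e)
qed

theorem wronskian_nonzero_if_linearly_independent:
  assumes "\<And>j. j < m \<Longrightarrow> gs j holomorphic_on UNIV"
    and "\<And>a. (\<And>x. (\<Sum>j<m. a j * gs j x) = 0) \<Longrightarrow> \<forall>j<m. a j = 0"
  shows "\<exists>x. wronskian m gs x \<noteq> 0"
  using assms
proof (induction m)
  case 0
  show ?case
    by (simp add: wronskian_eq_det det_dim_zero[OF wronskian_mat_carrier])
next
  case (Suc m)
  have "\<forall>j<m. a j = 0" if "\<And>x. (\<Sum>j<m. a j * gs j x) = 0" for a
  proof -
    have "\<forall>j<Suc m. (a(m := 0)) j = 0"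
      using that by (intro Suc.prems(2)) simp
    then show ?thesis
      by (metis fun_upd_other less_SucI less_irrefl)
  qed
  then obtain x\<^sub>0 where x\<^sub>0: "wronskian m gs x\<^sub>0 \<noteq> 0"
    using Suc.IH Suc.prems(1) by force
  show ?case
  proof (rule ccontr)
    assume "\<nexists>x. wronskian (Suc m) gs x \<noteq> 0"
    then obtain a e where "e > 0" "a m = 1" and dep: "\<And>y. y \<in> ball x\<^sub>0 e \<Longrightarrow> (\<Sum>j<Suc m. a j * gs j y) = 0"
      using wronskian_Suc_eq_0_imp_locally_dependent[OF Suc.prems(1) _ x\<^sub>0] by blast
    have holo: "(\<lambda>x. \<Sum>j<Suc m. a j * gs j x) holomorphic_on UNIV"
      using Suc.prems(1) by (intro holomorphic_intros) auto
    have "(\<Sum>j<Suc m. a j * gs j x) = (\<lambda>_. 0) x" for x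
      by (rule analytic_continuation_open[of "ball x\<^sub>0 e" UNIV])
        (use \<open>e > 0\<close> dep holo in \<open>auto simp: connected_UNIV\<close>)
    then show False
      using Suc.prems(2) \<open>a m = 1\<close> by fastforce
  qed
qed

lemma wronskian_nonzero_vec_mult_eq_0:
  assumes "wronskian n g x \<noteq> 0"
    and "\<And>j. j < n \<Longrightarrow> (\<Sum>i<n. r i * (deriv ^^ i) (g j) x) = 0" and "s < n"
  shows "r s = 0"
proof (rule det_nonzero_vec_mult_eq_0[OF wronskian_mat_carrier])
  show "det (wronskian_mat n g x) \<noteq> 0"
    using assms(1) by (simp add: wronskian_eq_det)
  show "(\<Sum>i<n. r i * wronskian_mat n g x $$ (i, j)) = 0" if "j < n" for j
    using assms(2)[OF that] that by simp
qed (rule assms(3))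

definition wronskian_coeff :: "nat \<Rightarrow> (nat \<Rightarrow> complex \<Rightarrow> complex) \<Rightarrow> nat \<Rightarrow> complex \<Rightarrow> complex" where
  "wronskian_coeff n g i x =
    (-1) ^ (i + n) * det (mat n n (\<lambda>(k, j). (deriv ^^ (if k < i then k else Suc k)) (g j) x))"

lemma wronskian_append_expansion:
  "wronskian (Suc n) (\<lambda>j. if j < n then g j else f) x =
    (\<Sum>i<Suc n. wronskian_coeff n g i x * (deriv ^^ i) f x)"
proof -
  let ?W = "wronskian_mat (Suc n) (\<lambda>j. if j < n then g j else f) x"
  have "det ?W = (\<Sum>i<Suc n. ?W $$ (i, n) * cofactor ?W i n)"
    by (rule laplace_expansion_column) simp_all
  also have "\<dots> = (\<Sum>i<Suc n. wronskian_coeff n g i x * (deriv ^^ i) f x)"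
  proof (intro sum.cong refl)
    fix i assume "i \<in> {..<Suc n}"
    moreover have "mat_delete ?W i n = mat n n (\<lambda>(k, j). (deriv ^^ (if k < i then k else Suc k)) (g j) x)"
      unfolding mat_delete_def wronskian_mat_def by (rule eq_matI) auto
    ultimately show "?W $$ (i, n) * cofactor ?W i n = wronskian_coeff n g i x * (deriv ^^ i) f x"
      by (simp add: cofactor_def wronskian_coeff_def)
  qed
  finally show ?thesis
    by (simp add: wronskian_eq_det)
qed

lemma wronskian_coeff_last: "wronskian_coeff n g n x = wronskian n g x"
proof -
  have "mat n n (\<lambda>(k, j). (deriv ^^ (if k < n then k else Suc k)) (g j) x) = wronskian_mat n g x"
    unfolding wronskian_mat_def by (rule eq_matI) auto
  then show ?thesis
    by (simp add: wronskian_coeff_def wronskian_eq_det)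
qed

lemma polyexp_wronskian_coeff:
  "(\<And>j. j < n \<Longrightarrow> polyexp (g j)) \<Longrightarrow> polyexp (wronskian_coeff n g i)"
  unfolding wronskian_coeff_def[abs_def]
  by (intro polyexp_cmult polyexp_det polyexp_higher_deriv) auto

lemma wronskian_append_eq_0:
  assumes "j < n"
  shows "wronskian (Suc n) (\<lambda>k. if k < n then g k else g j) x = 0"
  unfolding wronskian_eq_det
proof (rule det_identical_columns[of _ "Suc n" j n])
  show "col (wronskian_mat (Suc n) (\<lambda>k. if k < n then g k else g j) x) j =
      col (wronskian_mat (Suc n) (\<lambda>k. if k < n then g k else g j) x) n"
    unfolding wronskian_mat_def using assms by (intro eq_vecI) auto
qed (use assms in auto)

lemma Kbar_expansion:
  "Kbar n c f x = (\<Sum>i<Suc n. wronskian_coeff n (\<lambda>j. dist_exp (c j)) i x * (deriv ^^ i) f x)"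
  unfolding Kbar_def by (rule wronskian_append_expansion)

section \<open>Factoring an operator through \<open>K\<close>\<close>

lemma higher_deriv_sum:
  assumes "finite I" and "\<And>i. i \<in> I \<Longrightarrow> f i holomorphic_on UNIV"
  shows "(deriv ^^ k) (\<lambda>x. \<Sum>i\<in>I. f i x) x = (\<Sum>i\<in>I. (deriv ^^ k) (f i) x)"
  using assms
proof (induction I rule: finite_induct)
  case (insert a I)
  have "(deriv ^^ k) (\<lambda>x. f a x + (\<Sum>i\<in>I. f i x)) x =
      (deriv ^^ k) (f a) x + (deriv ^^ k) (\<lambda>x. \<Sum>i\<in>I. f i x) x"
    using insert by (intro higher_deriv_add[of _ UNIV]) (auto intro!: holomorphic_intros)
  then show ?case
    using insert by simp
qed simp

lemma higher_deriv_higher_deriv: "(deriv ^^ a) ((deriv ^^ b) f) = (deriv ^^ (b + a)) f"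
  by (metis add.commute funpow_add o_apply)

lemma sum_lessThan_if_eq_mult:
  fixes X :: "'a::semiring_0" and a K :: nat
  assumes "a < K"
  shows "(\<Sum>t<K. (if a = t then X else 0) * Y t) = X * Y a"
proof -
  have "(\<Sum>t<K. (if a = t then X else 0) * Y t) = (\<Sum>t<K. if a = t then X * Y t else 0)"
    by (intro sum.cong) auto
  then show ?thesis
    using assms by (simp add: sum.delta')
qed

lemma higher_deriv_power_polyexp:
  assumes "polyexp f"
  shows "i \<le> e \<Longrightarrow> \<exists>h. polyexp h \<and> (\<forall>x. (deriv ^^ i) (\<lambda>x. f x ^ e) x = f x ^ (e - i) * h x)"
proof (induction i)
  case 0
  show ?case
    by (intro exI[of _ "\<lambda>_. 1"]) (simp add: polyexp_const)
next
  case (Suc i)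
  then obtain h where h: "polyexp h" "\<And>x. (deriv ^^ i) (\<lambda>x. f x ^ e) x = f x ^ (e - i) * h x"
    by auto
  define d where "d = e - Suc i"
  have e_i: "e - i = Suc d"
    using Suc.prems by (simp add: d_def)
  define h' where "h' x = of_nat (Suc d) * deriv f x * h x + f x * deriv h x" for x
  have "deriv (\<lambda>x. f x ^ Suc d * h x) x = f x ^ d * h' x" for x
  proof (rule DERIV_imp_deriv)
    have "(f has_field_derivative deriv f x) (at x)" "(h has_field_derivative deriv h x) (at x)"
      using polyexp_holomorphic[OF assms] polyexp_holomorphic[OF h(1)] holomorphic_derivI by blast+
    from DERIV_mult[OF DERIV_power[OF this(1), of "Suc d"] this(2)]
    show "((\<lambda>x. f x ^ Suc d * h x) has_field_derivative f x ^ d * h' x) (at x)"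
      by (simp add: h'_def algebra_simps)
  qed
  moreover have "polyexp h'"
    unfolding h'_def[abs_def]
    by (intro polyexp_add polyexp_mult polyexp_const polyexp_deriv assms h(1))
  moreover have "(deriv ^^ i) (\<lambda>x. f x ^ e) = (\<lambda>x. f x ^ Suc d * h x)"
    using h(2) e_i by auto
  ultimately show ?case
    by (intro exI[of _ h']) (simp add: d_def)
qed

lemma sum_triangle_regroup:
  fixes X :: "nat \<Rightarrow> nat \<Rightarrow> 'a::semiring_0"
  shows "(\<Sum>k<Suc m. \<Sum>i=0..k. X k i * Y (k - i)) =
    (\<Sum>j<Suc m. (\<Sum>k<Suc m. \<Sum>i=0..k. if k - i = j then X k i else 0) * Y j)"
proof -
  have "(\<Sum>j<Suc m. (\<Sum>k<Suc m. \<Sum>i=0..k. if k - i = j then X k i else 0) * Y j) =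
      (\<Sum>j<Suc m. \<Sum>k<Suc m. \<Sum>i=0..k. if k - i = j then X k i * Y j else 0)"
    by (auto simp: sum_distrib_right simp del: sum.lessThan_Suc intro!: sum.cong)
  also have "\<dots> = (\<Sum>k<Suc m. \<Sum>i=0..k. \<Sum>j<Suc m. if k - i = j then X k i * Y j else 0)"
    by (subst sum.swap) (rule sum.cong[OF refl], rule sum.swap)
  also have "\<dots> = (\<Sum>k<Suc m. \<Sum>i=0..k. X k i * Y (k - i))"
    by (intro sum.cong refl) auto
  finally show ?thesis ..
qed

locale common_kernel =
  fixes n :: nat and g :: "nat \<Rightarrow> complex \<Rightarrow> complex"
    and A :: "nat \<Rightarrow> complex \<Rightarrow> complex" and P :: "complex poly"
  assumes polyexp_g: "\<And>j. j < n \<Longrightarrow> polyexp (g j)"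
    and polyexp_A: "\<And>i. i \<le> n \<Longrightarrow> polyexp (A i)"
    and A_last: "A n = wronskian n g"
    and K_kills_g: "\<And>j x. j < n \<Longrightarrow> (\<Sum>i<Suc n. A i x * (deriv ^^ i) (g j) x) = 0"
    and P_kills_g: "\<And>j. j < n \<Longrightarrow> poly_deriv_op P (g j) = (\<lambda>_. 0)"
    and degree_P: "n \<le> degree P"
begin

definition K :: "(complex \<Rightarrow> complex) \<Rightarrow> complex \<Rightarrow> complex" where
  "K f = (\<lambda>x. \<Sum>i<Suc n. A i x * (deriv ^^ i) f x)"

abbreviation \<tau> :: "complex \<Rightarrow> complex" where
  "\<tau> \<equiv> A n"

definition M :: nat where
  "M = degree P - n"

lemma degree_P_eq: "degree P = n + M"
  using degree_P by (simp add: M_def)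

lemma holomorphic_A: "i \<le> n \<Longrightarrow> A i holomorphic_on S"
  using polyexp_A polyexp_holomorphic by blast

lemma holomorphic_K: "f holomorphic_on UNIV \<Longrightarrow> K f holomorphic_on UNIV"
  unfolding K_def by (intro holomorphic_intros holomorphic_A holomorphic_higher_deriv) auto

text \<open>By Leibniz' rule, \<open>B k t\<close> is the coefficient of \<open>\<partial>\<^sup>t\<close> in \<open>\<partial>\<^sup>k \<circ> K\<close>.\<close>

definition B :: "nat \<Rightarrow> nat \<Rightarrow> complex \<Rightarrow> complex" where
  "B k t x = (\<Sum>i<Suc n. \<Sum>s=0..k.
     if i + (k - s) = t then of_nat (k choose s) * (deriv ^^ s) (A i) x else 0)"

lemma higher_deriv_K:
  assumes f: "f holomorphic_on UNIV" and "k \<le> M"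
  shows "(deriv ^^ k) (K f) x = (\<Sum>t\<le>degree P. B k t x * (deriv ^^ t) f x)"
proof -
  have hf: "(deriv ^^ i) f holomorphic_on UNIV" for i
    using f by (rule holomorphic_higher_deriv) simp
  have "(deriv ^^ k) (K f) x = (\<Sum>i<Suc n. (deriv ^^ k) (\<lambda>x. A i x * (deriv ^^ i) f x) x)"
    unfolding K_def by (rule higher_deriv_sum) (auto intro!: holomorphic_intros holomorphic_A hf)
  also have "\<dots> = (\<Sum>i<Suc n. \<Sum>s=0..k.
      of_nat (k choose s) * (deriv ^^ s) (A i) x * (deriv ^^ (i + (k - s))) f x)"
    by (intro sum.cong refl, subst higher_deriv_mult[of _ UNIV])
      (auto simp: holomorphic_A hf higher_deriv_higher_deriv)
  also have "\<dots> = (\<Sum>i<Suc n. \<Sum>s=0..k. \<Sum>t\<le>degree P.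
      (if i + (k - s) = t then of_nat (k choose s) * (deriv ^^ s) (A i) x else 0) * (deriv ^^ t) f x)"
    using \<open>k \<le> M\<close> by (intro sum.cong refl)
      (simp add: sum_lessThan_if_eq_mult degree_P_eq lessThan_Suc_atMost[symmetric])
  also have "\<dots> = (\<Sum>t\<le>degree P. B k t x * (deriv ^^ t) f x)"
    unfolding B_def sum_distrib_right
    by (subst sum.swap) (simp add: sum.swap[of _ "{0..k}"])
  finally show ?thesis .
qed

lemma polyexp_B: "polyexp (B k t)"
  unfolding B_def[abs_def]
  by (intro polyexp_sum polyexp_if polyexp_cmult polyexp_higher_deriv polyexp_A) simp

lemma B_eq_0_above_diagonal: "k < s \<Longrightarrow> B k (n + s) x = 0"
  unfolding B_def by (intro sum.neutral ballI) auto

lemma B_diagonal: "B k (n + k) x = \<tau> x"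
proof -
  have "B k (n + k) x = (\<Sum>i<Suc n. if i = n then \<tau> x else 0)"
    unfolding B_def
  proof (intro sum.cong refl)
    fix i assume i: "i \<in> {..<Suc n}"
    show "(\<Sum>s=0..k. if i + (k - s) = n + k then of_nat (k choose s) * (deriv ^^ s) (A i) x else 0) =
        (if i = n then \<tau> x else 0)"
    proof (cases "i = n")
      case True
      then have "(\<Sum>s=0..k. if i + (k - s) = n + k then of_nat (k choose s) * (deriv ^^ s) (A i) x else 0)
          = (\<Sum>s=0..k. if s = 0 then of_nat (k choose s) * (deriv ^^ s) (A i) x else 0)"
        by (intro sum.cong refl) auto
      then show ?thesis
        using True by simp
    next
      case False
      then show ?thesis
        using i by (intro trans[OF sum.neutral]) auto
    qed
  qed
  then show ?thesis
    by simp
qed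


text \<open>The coefficients \<open>B k (n + s)\<close>, \<open>k, s \<le> M\<close>, form a lower triangular matrix with diagonal
  \<open>\<tau>\<close>. Its cofactors yield coefficients \<open>q\<^sub>k\<close> for which \<open>\<Sum>\<^sub>k q\<^sub>k \<partial>\<^sup>k \<circ> K\<close> and \<open>\<tau>\<^sup>M\<^sup>+\<^sup>1 P(\<partial>)\<close>
  agree in all terms of order \<open>\<ge> n\<close>.\<close>

definition T :: "complex \<Rightarrow> complex mat" where
  "T x = mat (Suc M) (Suc M) (\<lambda>(k, s). B k (n + s) x)"

lemma T_carrier: "T x \<in> carrier_mat (Suc M) (Suc M)"
  by (simp add: T_def)

lemma det_T: "det (T x) = \<tau> x ^ Suc M"
proof -
  have "det (T x) = prod_list (diag_mat (T x))"
    by (rule det_lower_triangular[OF _ T_carrier]) (simp add: T_def B_eq_0_above_diagonal)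
  also have "diag_mat (T x) = map (\<lambda>_. \<tau> x) [0..<Suc M]"
    by (simp add: diag_mat_def T_def B_diagonal)
  finally show ?thesis
    by (simp add: map_replicate_const)
qed

definition q :: "nat \<Rightarrow> complex \<Rightarrow> complex" where
  "q k x = (\<Sum>s<Suc M. coeff P (n + s) * cofactor (T x) k s)"

lemma polyexp_q: "polyexp (q k)"
proof -
  have "q k = (\<lambda>x. \<Sum>s<Suc M. coeff P (n + s) * ((-1) ^ (k + s) *
      det (mat M M (\<lambda>(i, j). B (if i < k then i else Suc i) (n + (if j < s then j else Suc j)) x))))"
    unfolding q_def[abs_def] cofactor_def T_def mat_delete_mat by (simp add: case_prod_beta)
  moreover have "polyexp (\<lambda>x. \<Sum>s<Suc M. coeff P (n + s) * ((-1) ^ (k + s) *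
      det (mat M M (\<lambda>(i, j). B (if i < k then i else Suc i) (n + (if j < s then j else Suc j)) x))))"
    by (intro polyexp_sum polyexp_cmult polyexp_det polyexp_B)
  ultimately show ?thesis
    by simp
qed

lemma sum_q_B_upper:
  assumes "s < Suc M"
  shows "(\<Sum>k<Suc M. q k x * B k (n + s) x) = \<tau> x ^ Suc M * coeff P (n + s)"
proof -
  have "(\<Sum>k<Suc M. q k x * B k (n + s) x) =
      (\<Sum>r<Suc M. coeff P (n + r) * (\<Sum>k<Suc M. cofactor (T x) k r * T x $$ (k, s)))"
    unfolding q_def sum_distrib_left sum_distrib_right using assms
    by (subst sum.swap) (simp add: T_def mult.assoc)
  also have "\<dots> = (\<Sum>r<Suc M. if r = s then coeff P (n + r) * det (T x) else 0)"
    by (intro sum.cong refl) (use sum_cofactor_mult_col[OF T_carrier _ assms] in auto)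
  also have "\<dots> = coeff P (n + s) * det (T x)"
    using assms by simp
  finally show ?thesis
    by (simp add: det_T)
qed


definition R :: "nat \<Rightarrow> complex \<Rightarrow> complex" where
  "R t x = \<tau> x ^ Suc M * coeff P t - (\<Sum>k<Suc M. q k x * B k t x)"

lemma R_eq_0_upper:
  assumes "n \<le> t" and "t \<le> degree P"
  shows "R t x = 0"
  using sum_q_B_upper[of "t - n" x] assms by (simp add: R_def degree_P_eq)

lemma sum_R_higher_deriv:
  assumes "f holomorphic_on UNIV"
  shows "(\<Sum>t\<le>degree P. R t x * (deriv ^^ t) f x) =
    \<tau> x ^ Suc M * poly_deriv_op P f x - (\<Sum>k<Suc M. q k x * (deriv ^^ k) (K f) x)"
proof -
  have "(\<Sum>k<Suc M. q k x * (deriv ^^ k) (K f) x) =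
      (\<Sum>k<Suc M. \<Sum>t\<le>degree P. q k x * B k t x * (deriv ^^ t) f x)"
    by (intro sum.cong refl)
      (simp add: higher_deriv_K[OF assms] sum_distrib_left mult.assoc less_Suc_eq_le)
  also have "\<dots> = (\<Sum>t\<le>degree P. (\<Sum>k<Suc M. q k x * B k t x) * (deriv ^^ t) f x)"
    by (subst sum.swap) (simp add: sum_distrib_right del: sum.lessThan_Suc)
  finally show ?thesis
    by (simp add: R_def poly_deriv_op_def left_diff_distrib sum_subtractf sum_distrib_left mult.assoc)
qed

text \<open>The operator with coefficients \<open>R\<close> kills \<open>g\<^sub>0, \<dots>, g\<^sub>n\<^sub>-\<^sub>1\<close> and has order \<open>< n\<close>, so it
  vanishes wherever their Wronskian \<open>\<tau>\<close> does not.\<close>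

lemma R_eq_0_lower:
  assumes "\<tau> x \<noteq> 0" and "t < n"
  shows "R t x = 0"
proof (rule wronskian_nonzero_vec_mult_eq_0[of n g x])
  show "wronskian n g x \<noteq> 0"
    using assms(1) A_last by simp
  show "(\<Sum>t<n. R t x * (deriv ^^ t) (g j) x) = 0" if "j < n" for j
  proof -
    have K_g: "K (g j) = (\<lambda>_. 0)"
      using K_kills_g[OF that] by (simp add: K_def fun_eq_iff)
    have "(\<Sum>t<n. R t x * (deriv ^^ t) (g j) x) = (\<Sum>t\<le>degree P. R t x * (deriv ^^ t) (g j) x)"
      using degree_P by (intro sum.mono_neutral_left) (auto simp: R_eq_0_upper)
    also have "\<dots> = 0"
      using P_kills_g[OF that] polyexp_holomorphic[OF polyexp_g[OF that]]
      by (simp add: sum_R_higher_deriv K_g)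
    finally show ?thesis .
  qed
qed (rule assms(2))

lemma scaled_P_eq_sum_q:
  assumes "f holomorphic_on UNIV" and "\<tau> x \<noteq> 0"
  shows "\<tau> x ^ Suc M * poly_deriv_op P f x = (\<Sum>k<Suc M. q k x * (deriv ^^ k) (K f) x)"
proof -
  have "R t x = 0" if "t \<le> degree P" for t
    using R_eq_0_lower[OF assms(2)] R_eq_0_upper that by (cases "t < n") auto
  then show ?thesis
    using sum_R_higher_deriv[OF assms(1), of x] by simp
qed


text \<open>With \<open>\<pi> = \<tau>\<^sup>2\<^sup>M\<^sup>+\<^sup>1\<close>, every derivative \<open>\<partial>\<^sup>i \<pi>\<close> with \<open>i \<le> M\<close> is divisible by \<open>\<tau>\<^sup>M\<^sup>+\<^sup>1\<close>, so
  \<open>\<partial>\<^sup>k (\<pi> v)\<close> is \<open>\<tau>\<^sup>M\<^sup>+\<^sup>1\<close> times an operator in \<open>v\<close> with polynomial-exponential coefficients.\<close>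

definition \<pi> :: "complex \<Rightarrow> complex" where
  "\<pi> x = \<tau> x ^ (Suc M + M)"

definition h :: "nat \<Rightarrow> complex \<Rightarrow> complex" where
  "h i = (SOME h. polyexp h \<and> (\<forall>x. (deriv ^^ i) \<pi> x = \<tau> x ^ (Suc M + M - i) * h x))"

lemma polyexp_\<pi>: "polyexp \<pi>"
  unfolding \<pi>_def[abs_def] by (intro polyexp_power polyexp_A) simp

lemma h_spec:
  assumes "i \<le> Suc M + M"
  shows "polyexp (h i)" and "(deriv ^^ i) \<pi> x = \<tau> x ^ (Suc M + M - i) * h i x"
proof -
  have "\<exists>h. polyexp h \<and> (\<forall>x. (deriv ^^ i) \<pi> x = \<tau> x ^ (Suc M + M - i) * h x)"
    unfolding \<pi>_def[abs_def] using assms by (intro higher_deriv_power_polyexp polyexp_A) simp_all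
  from someI_ex[OF this] show "polyexp (h i)" "(deriv ^^ i) \<pi> x = \<tau> x ^ (Suc M + M - i) * h i x"
    unfolding h_def by blast+
qed

lemma higher_deriv_K_eq:
  assumes f: "f holomorphic_on UNIV" and x: "\<tau> x \<noteq> 0" and "k \<le> M"
  shows "(deriv ^^ k) (K f) x = \<tau> x ^ Suc M *
    (\<Sum>i=0..k. of_nat (k choose i) * \<tau> x ^ (M - i) * h i x * (deriv ^^ (k - i)) (\<lambda>y. K f y / \<pi> y) x)"
proof -
  define U where "U = {y. \<tau> y \<noteq> 0}"
  have "open U"
    unfolding U_def using holomorphic_A[of n UNIV]
    by (intro open_Collect_neq continuous_on_const) (auto intro: holomorphic_on_imp_continuous_on)
  have "x \<in> U"
    using x by (simp add: U_def)
  have \<pi>_U: "\<pi> y \<noteq> 0" if "y \<in> U" for y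
    using that by (simp add: U_def \<pi>_def)
  define v where "v = (\<lambda>y. K f y / \<pi> y)"
  have holo_\<pi>: "\<pi> holomorphic_on U"
    using polyexp_holomorphic[OF polyexp_\<pi>] .
  have holo_v: "v holomorphic_on U"
    unfolding v_def using \<pi>_U holomorphic_K[OF f]
    by (intro holomorphic_on_divide holo_\<pi>) (auto intro: holomorphic_on_subset)
  have "eventually (\<lambda>y. K f y = \<pi> y * v y) (nhds x)"
    using eventually_nhds_in_open[OF \<open>open U\<close> \<open>x \<in> U\<close>]
    by eventually_elim (simp add: v_def \<pi>_U)
  then have "(deriv ^^ k) (K f) x = (deriv ^^ k) (\<lambda>y. \<pi> y * v y) x"
    by (rule higher_deriv_cong_ev) simp
  also have "\<dots> = (\<Sum>i=0..k. of_nat (k choose i) * (deriv ^^ i) \<pi> x * (deriv ^^ (k - i)) v x)"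
    by (rule higher_deriv_mult[OF holo_\<pi> holo_v \<open>open U\<close> \<open>x \<in> U\<close>])
  also have "\<dots> = (\<Sum>i=0..k. of_nat (k choose i) * (\<tau> x ^ Suc M * (\<tau> x ^ (M - i) * h i x)) *
      (deriv ^^ (k - i)) v x)"
  proof (intro sum.cong refl)
    fix i assume "i \<in> {0..k}"
    then have "i \<le> M"
      using \<open>k \<le> M\<close> by simp
    then have "Suc M + M - i = Suc M + (M - i)"
      by simp
    then have "\<tau> x ^ (Suc M + M - i) = \<tau> x ^ Suc M * \<tau> x ^ (M - i)"
      by (simp only: power_add)
    then show "of_nat (k choose i) * (deriv ^^ i) \<pi> x * (deriv ^^ (k - i)) v x =
        of_nat (k choose i) * (\<tau> x ^ Suc M * (\<tau> x ^ (M - i) * h i x)) * (deriv ^^ (k - i)) v x"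
      using h_spec(2)[of i x] \<open>i \<le> M\<close> by (simp only: mult.assoc)
  qed
  finally show ?thesis
    by (simp add: v_def sum_distrib_left algebra_simps)
qed

definition Q :: "nat \<Rightarrow> complex \<Rightarrow> complex" where
  "Q j x = (\<Sum>k<Suc M. \<Sum>i=0..k.
     if k - i = j then q k x * of_nat (k choose i) * \<tau> x ^ (M - i) * h i x else 0)"

lemma polyexp_Q: "polyexp (Q j)"
  unfolding Q_def[abs_def]
  by (intro polyexp_sum polyexp_if polyexp_mult polyexp_power polyexp_const polyexp_q polyexp_A h_spec(1))
    auto

lemma factorization:
  assumes "f holomorphic_on UNIV" and "\<pi> x \<noteq> 0"
  shows "poly_deriv_op P f x = (\<Sum>j<Suc M. Q j x * (deriv ^^ j) (\<lambda>y. K f y / \<pi> y) x)"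
proof -
  have x: "\<tau> x \<noteq> 0"
    using assms(2) by (simp add: \<pi>_def)
  have "\<tau> x ^ Suc M * poly_deriv_op P f x = (\<Sum>k<Suc M. q k x * (deriv ^^ k) (K f) x)"
    by (rule scaled_P_eq_sum_q[OF assms(1) x])
  also have "\<dots> = \<tau> x ^ Suc M * (\<Sum>k<Suc M. \<Sum>i=0..k.
      (q k x * of_nat (k choose i) * \<tau> x ^ (M - i) * h i x) * (deriv ^^ (k - i)) (\<lambda>y. K f y / \<pi> y) x)"
    unfolding sum_distrib_left
    by (intro sum.cong refl) (simp add: higher_deriv_K_eq[OF assms(1) x] sum_distrib_left algebra_simps)
  also have "\<dots> = \<tau> x ^ Suc M * (\<Sum>j<Suc M. Q j x * (deriv ^^ j) (\<lambda>y. K f y / \<pi> y) x)"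
    unfolding Q_def by (subst sum_triangle_regroup) (rule refl)
  finally show ?thesis
    using x by simp
qed


lemma operator_factorization:
  assumes "\<tau> x\<^sub>0 \<noteq> 0"
  shows "\<exists>Qs \<pi>. polyexp \<pi> \<and> \<pi> \<noteq> (\<lambda>_. 0) \<and> (\<forall>i<length Qs. polyexp (Qs ! i)) \<and>
    (\<forall>f. f holomorphic_on UNIV \<longrightarrow>
      (\<forall>x. \<pi> x \<noteq> 0 \<longrightarrow> poly_deriv_op P f x = apply_op Qs (\<lambda>y. K f y / \<pi> y) x))"
proof (intro exI[of _ "map Q [0..<Suc M]"] exI[of _ \<pi>] conjI allI impI)
  show "\<pi> \<noteq> (\<lambda>_. 0)"
  proof
    assume "\<pi> = (\<lambda>_. 0)"
    then have "\<pi> x\<^sub>0 = 0"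
      by simp
    with assms show False
      by (simp add: \<pi>_def)
  qed
  show "polyexp (map Q [0..<Suc M] ! i)" if "i < length (map Q [0..<Suc M])" for i
    using polyexp_Q that by (simp del: upt_Suc)
  show "poly_deriv_op P f x = apply_op (map Q [0..<Suc M]) (\<lambda>y. K f y / \<pi> y) x"
    if "f holomorphic_on UNIV" "\<pi> x \<noteq> 0" for f x
    using factorization[OF that] by (simp add: apply_op_map_upt del: upt_Suc)
qed (rule polyexp_\<pi>)

end

lemma common_kernel_wronskian_coeff:
  assumes "\<And>j. j < n \<Longrightarrow> polyexp (g j)"
    and "\<And>j. j < n \<Longrightarrow> poly_deriv_op P (g j) = (\<lambda>_. 0)" and "n \<le> degree P"
  shows "common_kernel n g (wronskian_coeff n g) P"
proof
  show "(\<Sum>i<Suc n. wronskian_coeff n g i x * (deriv ^^ i) (g j) x) = 0" if "j < n" for j x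
    using wronskian_append_expansion[of n g "g j" x] wronskian_append_eq_0[OF that, of g x] by simp
qed (use assms in \<open>auto simp: polyexp_wronskian_coeff wronskian_coeff_last fun_eq_iff\<close>)

lemma polyexp_dist_exp: "is_dist c \<Longrightarrow> polyexp (dist_exp c)"
  unfolding is_dist_def using dist_exp_eq_exp_sum[of "{p. c p \<noteq> 0}" c] polyexp_exp_sum by simp

lemma exists_poly_deriv_op_annihilating_dist_exps:
  fixes c :: "nat \<Rightarrow> complex \<times> nat \<Rightarrow> complex"
  assumes "\<And>i. i < n \<Longrightarrow> is_dist (c i)"
  shows "\<exists>P. P \<noteq> 0 \<and> n \<le> degree P \<and> (\<forall>i<n. poly_deriv_op P (dist_exp (c i)) = (\<lambda>_. 0))"
proof -
  define S where "S = (\<Union>i<n. {p. c i p \<noteq> 0})"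
  have S: "finite S"
    using assms unfolding S_def is_dist_def by (intro finite_UN_I) simp_all
  define R where "R = Max (snd ` S)"
  have R: "snd p \<le> R" if "p \<in> S" for p
    using S that by (simp add: R_def)
  obtain P where P: "P \<noteq> 0" "n \<le> degree P"
    and kills: "\<And>q. \<forall>l\<in>fst ` S. degree (q l) \<le> R \<Longrightarrow> poly_deriv_op P (exp_sum (fst ` S) q) = (\<lambda>_. 0)"
    using exists_poly_deriv_op_annihilating_exp_sums[of "fst ` S" n R] S by blast
  have "poly_deriv_op P (dist_exp (c i)) = (\<lambda>_. 0)" if "i < n" for i
  proof -
    have "dist_exp (c i) = exp_sum (fst ` S) (exp_coeff S (c i))"
      using S that by (intro dist_exp_eq_exp_sum) (auto simp: S_def)
    then show ?thesis
      using kills degree_exp_coeff_le[OF S R] by simp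
  qed
  then show ?thesis
    using P by blast
qed

lemma wronskian_dist_exp_nonzero:
  fixes c :: "nat \<Rightarrow> complex \<times> nat \<Rightarrow> complex"
  assumes "\<And>i. i < n \<Longrightarrow> is_dist (c i)"
    and "\<And>a. (\<And>p. (\<Sum>i<n. a i * c i p) = 0) \<Longrightarrow> (\<forall>i<n. a i = 0)"
  shows "\<exists>x. wronskian n (\<lambda>j. dist_exp (c j)) x \<noteq> 0"
proof (rule wronskian_nonzero_if_linearly_independent)
  show "dist_exp (c j) holomorphic_on UNIV" if "j < n" for j
    using assms(1)[OF that] by (intro polyexp_holomorphic polyexp_dist_exp)
  show "\<forall>j<n. a j = 0" if "\<And>x. (\<Sum>j<n. a j * dist_exp (c j) x) = 0" for a
    using assms that by (rule dist_exp_linearly_independent)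
qed

theorem mainTheorem1:
  fixes n :: nat and c :: "nat \<Rightarrow> complex \<times> nat \<Rightarrow> complex"
  assumes "n \<ge> 1"
    and "\<And>i. i < n \<Longrightarrow> is_dist (c i)"
    and "\<And>a. (\<And>p. (\<Sum>i<n. a i * c i p) = 0) \<Longrightarrow> (\<forall>i<n. a i = 0)"
  shows "\<exists>(L0 :: complex list) (Qbar :: (complex \<Rightarrow> complex) list)
            (KbarC :: (complex \<Rightarrow> complex) list) (pi :: complex \<Rightarrow> complex).
           (\<exists>i<length L0. L0 ! i \<noteq> 0) \<and>
           polyexp pi \<and> pi \<noteq> (\<lambda>_. 0) \<and>
           (\<forall>i<length Qbar. polyexp (Qbar ! i)) \<and>
           (\<forall>i<length KbarC. polyexp (KbarC ! i)) \<and>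
           (\<forall>f. f holomorphic_on UNIV \<longrightarrow> apply_op KbarC f = Kbar n c f) \<and>
           (\<forall>f. f holomorphic_on UNIV \<longrightarrow>
              (\<forall>x. pi x \<noteq> 0 \<longrightarrow>
                 apply_const_op L0 f x = apply_op Qbar (\<lambda>y. Kbar n c f y / pi y) x))"
proof -
  define g where "g = (\<lambda>j. dist_exp (c j))"
  obtain x\<^sub>0 where x\<^sub>0: "wronskian n g x\<^sub>0 \<noteq> 0"
    using wronskian_dist_exp_nonzero[of n c] assms(2,3) unfolding g_def by blast
  obtain P where P: "P \<noteq> 0" "n \<le> degree P" "\<And>j. j < n \<Longrightarrow> poly_deriv_op P (g j) = (\<lambda>_. 0)"
    using exists_poly_deriv_op_annihilating_dist_exps[of n c] assms(2) by (auto simp: g_def)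
  have polyexp_g: "polyexp (g j)" if "j < n" for j
    unfolding g_def using assms(2)[OF that] by (rule polyexp_dist_exp)
  interpret common_kernel n g "wronskian_coeff n g" P
    using polyexp_g P by (intro common_kernel_wronskian_coeff)
  have K_eq: "K f = Kbar n c f" for f
    unfolding K_def by (simp add: Kbar_expansion g_def fun_eq_iff)
  obtain Qs \<pi> where \<pi>: "polyexp \<pi>" "\<pi> \<noteq> (\<lambda>_. 0)" and Qs: "\<forall>i<length Qs. polyexp (Qs ! i)"
    and factorization: "\<forall>f. f holomorphic_on UNIV \<longrightarrow>
      (\<forall>x. \<pi> x \<noteq> 0 \<longrightarrow> poly_deriv_op P f x = apply_op Qs (\<lambda>y. Kbar n c f y / \<pi> y) x)"
    using operator_factorization[of x\<^sub>0] x\<^sub>0 by (auto simp: A_last K_eq)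
  have Kbar: "apply_op (map (wronskian_coeff n g) [0..<Suc n]) f = Kbar n c f" for f
    unfolding K_eq[symmetric] by (simp add: K_def apply_op_map_upt fun_eq_iff del: upt_Suc)
  show ?thesis
    by (rule exI[of _ "coeffs P"], rule exI[of _ Qs],
        rule exI[of _ "map (wronskian_coeff n g) [0..<Suc n]"], rule exI[of _ \<pi>])
      (use ex_coeffs_nonzero[OF P(1)] \<pi> Qs factorization Kbar polyexp_g in
        \<open>auto simp: apply_const_op_coeffs polyexp_wronskian_coeff simp del: upt_Suc\<close>)
qed

end
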